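(* There exist an alphabet $\Sigma$, a set $D\subseteq\Sigma^\omega$ of don't care words with trivial right-congruence, and a DBA $\mathcal{A}$ with informative right-congruence such that there are several pairwise non-isomorphic $D$-minimal DBAs $\mathcal{B}$ with $L(\mathcal{B})\equiv_D L(\mathcal{A})$, and such that some $D$-minimal DBA $\mathcal{B}$ with $L(\mathcal{B})\equiv_D L(\mathcal{A})$ does not have informative right-congruence.
   Context: A DBA $(\Sigma,Q,\delta,q_0,F)$ is a finite deterministic transition system (all states reachable) with $F\subseteq Q$, accepting $\alpha\in\Sigma^\omega$ iff a state of $F$ is visited infinitely often in the run on $\alpha$. $L\equiv_D L'$ means $L\setminus D=L'\setminus D$. A DBA $\mathcal{B}$ is $D$-minimal (for the language $L(\mathcal{B})$ up to $\equiv_D$) if no DBA with fewer states accepts a language $D$-equivalent to $L(\mathcal{B})$. For $L\subseteq\Sigma^\omega$, $u\sim_L v$ iff for all $\alpha\in\Sigma^\omega$: $u\alpha\in L\iff v\alpha\in L$; $D$ has trivial right-congruence if $\sim_D$ has one class. An automaton accepting $L$ has informative right-congruence if its transition system is isomorphic to the transition system induced by $\sim_L$ (states the classes $[u]$, initial $[\epsilon]$, transitions $[u]\xrightarrow{\sigma}[u\sigma]$). *)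

theory Defs
  imports Main "HOL-Library.Infinite_Set"
begin

text \<open>States of automata are natural numbers (any finite state set can be encoded this way),
 so quantifying over DBAs with state sets of type nat set covers all DBAs up to isomorphism.\<close>

type_synonym letter = nat

definition omega_words :: "letter set \<Rightarrow> (nat \<Rightarrow> letter) set" where
  "omega_words \<Sigma> = {\<alpha>. \<forall>i. \<alpha> i \<in> \<Sigma>}"

record dba =
  states :: "nat set"
  trans  :: "nat \<Rightarrow> letter \<Rightarrow> nat"
  init   :: nat
  final  :: "nat set"

definition delta_star :: "dba \<Rightarrow> nat \<Rightarrow> letter list \<Rightarrow> nat" where
  "delta_star A q u = fold (\<lambda>a p. trans A p a) u q"

definition wf_dba :: "letter set \<Rightarrow> dba \<Rightarrow> bool" where
  "wf_dba \<Sigma> A \<longleftrightarrow> finite (states A) \<and> init A \<in> states A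
     \<and> (\<forall>q\<in>states A. \<forall>a\<in>\<Sigma>. trans A q a \<in> states A)
     \<and> final A \<subseteq> states A
     \<and> (\<forall>q\<in>states A. \<exists>u\<in>lists \<Sigma>. delta_star A (init A) u = q)"

primrec run :: "dba \<Rightarrow> (nat \<Rightarrow> letter) \<Rightarrow> nat \<Rightarrow> nat" where
  "run A \<alpha> 0 = init A"
| "run A \<alpha> (Suc i) = trans A (run A \<alpha> i) (\<alpha> i)"

definition lang :: "letter set \<Rightarrow> dba \<Rightarrow> (nat \<Rightarrow> letter) set" where
  "lang \<Sigma> A = {\<alpha> \<in> omega_words \<Sigma>. \<exists>\<^sub>\<infinity> i. run A \<alpha> i \<in> final A}"

definition equiv_D :: "(nat \<Rightarrow> letter) set \<Rightarrow> (nat \<Rightarrow> letter) set \<Rightarrow> (nat \<Rightarrow> letter) set \<Rightarrow> bool" where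
  "equiv_D D L L' \<longleftrightarrow> L - D = L' - D"

definition D_minimal :: "letter set \<Rightarrow> (nat \<Rightarrow> letter) set \<Rightarrow> dba \<Rightarrow> bool" where
  "D_minimal \<Sigma> D B \<longleftrightarrow> wf_dba \<Sigma> B \<and>
     (\<forall>B'. wf_dba \<Sigma> B' \<and> card (states B') < card (states B) \<longrightarrow>
            \<not> equiv_D D (lang \<Sigma> B') (lang \<Sigma> B))"

definition dba_iso :: "dba \<Rightarrow> dba \<Rightarrow> letter set \<Rightarrow> bool" where
  "dba_iso A B \<Sigma> \<longleftrightarrow> (\<exists>h. bij_betw h (states A) (states B) \<and> h (init A) = init B
     \<and> (\<forall>q\<in>states A. \<forall>a\<in>\<Sigma>. h (trans A q a) = trans B (h q) a)
     \<and> (\<forall>q\<in>states A. q \<in> final A \<longleftrightarrow> h q \<in> final B))"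

definition prepend :: "letter list \<Rightarrow> (nat \<Rightarrow> letter) \<Rightarrow> (nat \<Rightarrow> letter)" where
  "prepend u \<alpha> = (\<lambda>i. if i < length u then u ! i else \<alpha> (i - length u))"

definition right_cong :: "letter set \<Rightarrow> (nat \<Rightarrow> letter) set \<Rightarrow> letter list \<Rightarrow> letter list \<Rightarrow> bool" where
  "right_cong \<Sigma> L u v \<longleftrightarrow> (\<forall>\<alpha>\<in>omega_words \<Sigma>. prepend u \<alpha> \<in> L \<longleftrightarrow> prepend v \<alpha> \<in> L)"

definition trivial_right_cong :: "letter set \<Rightarrow> (nat \<Rightarrow> letter) set \<Rightarrow> bool" where
  "trivial_right_cong \<Sigma> L \<longleftrightarrow> (\<forall>u\<in>lists \<Sigma>. \<forall>v\<in>lists \<Sigma>. right_cong \<Sigma> L u v)"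

text \<open>Transition system induced by \<sim>_L: states are the classes [u] (u \<in> \<Sigma>*), initial [\<epsilon>],
  transitions [u] --a--> [ua] (well defined since \<sim>_L is a right congruence).\<close>
definition rc_class :: "letter set \<Rightarrow> (nat \<Rightarrow> letter) set \<Rightarrow> letter list \<Rightarrow> letter list set" where
  "rc_class \<Sigma> L u = {v \<in> lists \<Sigma>. right_cong \<Sigma> L u v}"

definition rc_classes :: "letter set \<Rightarrow> (nat \<Rightarrow> letter) set \<Rightarrow> letter list set set" where
  "rc_classes \<Sigma> L = rc_class \<Sigma> L ` lists \<Sigma>"

definition rc_step :: "letter set \<Rightarrow> (nat \<Rightarrow> letter) set \<Rightarrow> letter list set \<Rightarrow> letter \<Rightarrow> letter list set" where
  "rc_step \<Sigma> L C a = rc_class \<Sigma> L ((SOME u. u \<in> C) @ [a])"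

definition informative_rc :: "letter set \<Rightarrow> dba \<Rightarrow> bool" where
  "informative_rc \<Sigma> A \<longleftrightarrow> (\<exists>h. bij_betw h (states A) (rc_classes \<Sigma> (lang \<Sigma> A))
     \<and> h (init A) = rc_class \<Sigma> (lang \<Sigma> A) []
     \<and> (\<forall>q\<in>states A. \<forall>a\<in>\<Sigma>. h (trans A q a) = rc_step \<Sigma> (lang \<Sigma> A) (h q) a))"

end

theory Submission
  imports Defs
begin

text \<open>Take \<Sigma> = {0, 1, 2} and let D be the words with infinitely many 2s; membership in D
  does not depend on finite prefixes, so its right congruence is trivial. The automaton A
  remembers whether the last letter other than 2 was 0 and accepts when this holds infinitely
  often; its two states are separated by the suffix 222..., so its right congruence is
  informative. Outside D, A accepts exactly the words with infinitely many 0s, and so does the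
  two-state automaton remembering whether the last letter was 0, from either initial state.
  Only one of these two initial states is accepting, so the two automata are not isomorphic,
  and both are D-minimal because a one-state automaton accepts all words or none. But the
  language of words with infinitely many 0s is again prefix-independent, so its right
  congruence has one class and no two-state automaton for it has informative right
  congruence.\<close>

lemma INFM_add_iff: "(INFM i. P (i + k)) \<longleftrightarrow> (INFM i::nat. P i)"
  using eventually_sequentially_seg[of "\<lambda>i. \<not> P i" k]
  by (simp add: frequently_def cofinite_eq_sequentially)

lemma INFM_Suc_iff: "(INFM i. P (Suc i)) \<longleftrightarrow> (INFM i::nat. P i)"
  using INFM_add_iff[of P 1] by simp

lemma delta_star_Nil [simp]: "delta_star A q [] = q"
  by (simp add: delta_star_def)

lemma delta_star_Cons [simp]: "delta_star A q (a # u) = delta_star A (trans A q a) u"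
  by (simp add: delta_star_def)

lemma delta_star_snoc: "delta_star A q (u @ [a]) = trans A (delta_star A q u) a"
  by (simp add: delta_star_def)

lemma delta_star_in_states:
  assumes "wf_dba \<Sigma> A" "q \<in> states A" "u \<in> lists \<Sigma>"
  shows "delta_star A q u \<in> states A"
  using assms(2,3)
proof (induction u arbitrary: q)
  case (Cons a u)
  then show ?case using assms(1) by (simp add: wf_dba_def)
qed simp

lemma prepend_add_length [simp]: "prepend u \<alpha> (i + length u) = \<alpha> i"
  by (simp add: prepend_def)

lemma prepend_in_omega_words:
  "u \<in> lists \<Sigma> \<Longrightarrow> \<alpha> \<in> omega_words \<Sigma> \<Longrightarrow> prepend u \<alpha> \<in> omega_words \<Sigma>"
  by (auto simp: omega_words_def prepend_def)

lemma run_prepend_prefix: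
  "j \<le> length u \<Longrightarrow> run A (prepend u \<alpha>) j = delta_star A (init A) (take j u)"
proof (induction j)
  case (Suc j)
  then have "take (Suc j) u = take j u @ [u ! j]" by (simp add: take_Suc_conv_app_nth)
  with Suc show ?case by (simp add: delta_star_snoc prepend_def)
qed simp

lemma run_prepend:
  "run A (prepend u \<alpha>) (i + length u) = run (A\<lparr>init := delta_star A (init A) u\<rparr>) \<alpha> i"
  by (induction i) (simp_all add: run_prepend_prefix)

lemma prepend_in_lang_iff:
  assumes "u \<in> lists \<Sigma>" "\<alpha> \<in> omega_words \<Sigma>"
  shows "prepend u \<alpha> \<in> lang \<Sigma> A \<longleftrightarrow>
     (INFM i. run (A\<lparr>init := delta_star A (init A) u\<rparr>) \<alpha> i \<in> final A)"
  using prepend_in_omega_words[OF assms]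
    INFM_add_iff[of "\<lambda>i. run A (prepend u \<alpha>) i \<in> final A" "length u"]
  by (simp add: lang_def run_prepend)

lemma right_cong_if_delta_star_eq:
  assumes "u \<in> lists \<Sigma>" "v \<in> lists \<Sigma>" "delta_star A (init A) u = delta_star A (init A) v"
  shows "right_cong \<Sigma> (lang \<Sigma> A) u v"
  using assms by (simp add: right_cong_def prepend_in_lang_iff)

lemma rc_class_eqI: "right_cong \<Sigma> L u v \<Longrightarrow> rc_class \<Sigma> L u = rc_class \<Sigma> L v"
  unfolding rc_class_def right_cong_def by auto

lemma trivial_right_cong_INFM_letter:
  "trivial_right_cong \<Sigma> {\<alpha> \<in> omega_words \<Sigma>. INFM i. \<alpha> i = a}"
proof -
  have "(INFM i. prepend u \<alpha> i = a) \<longleftrightarrow> (INFM i. \<alpha> i = a)" for u \<alpha>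
    using INFM_add_iff[of "\<lambda>i. prepend u \<alpha> i = a" "length u"] by simp
  then show ?thesis
    by (simp add: trivial_right_cong_def right_cong_def prepend_in_omega_words)
qed

text \<open>The isomorphism sends a state q to the class of any word leading to q.\<close>

lemma informative_rcI:
  assumes wf: "wf_dba \<Sigma> A"
    and separated: "\<And>u v. u \<in> lists \<Sigma> \<Longrightarrow> v \<in> lists \<Sigma> \<Longrightarrow> right_cong \<Sigma> (lang \<Sigma> A) u v
        \<Longrightarrow> delta_star A (init A) u = delta_star A (init A) v"
  shows "informative_rc \<Sigma> A"
proof -
  let ?L = "lang \<Sigma> A" and ?\<delta> = "delta_star A (init A)"
  have rc_iff: "right_cong \<Sigma> ?L u v \<longleftrightarrow> ?\<delta> u = ?\<delta> v" if "u \<in> lists \<Sigma>" "v \<in> lists \<Sigma>" for u v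
    using separated right_cong_if_delta_star_eq that by blast
  define rep where "rep q = (SOME u. u \<in> lists \<Sigma> \<and> ?\<delta> u = q)" for q
  have rep: "rep q \<in> lists \<Sigma> \<and> ?\<delta> (rep q) = q" if "q \<in> states A" for q
  proof -
    have "\<exists>u. u \<in> lists \<Sigma> \<and> ?\<delta> u = q" using wf that unfolding wf_dba_def by blast
    then show ?thesis unfolding rep_def by (rule someI_ex)
  qed
  define h where "h q = rc_class \<Sigma> ?L (rep q)" for q
  have mem_h: "v \<in> h q \<longleftrightarrow> v \<in> lists \<Sigma> \<and> ?\<delta> v = q" if "q \<in> states A" for q v
    using rep[OF that] rc_iff[of "rep q" v] unfolding h_def rc_class_def by auto
  have class_eq: "rc_class \<Sigma> ?L u = h (?\<delta> u)" if "u \<in> lists \<Sigma>" for u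
  proof -
    have "?\<delta> u \<in> states A" using wf that by (intro delta_star_in_states) (auto simp: wf_dba_def)
    then show ?thesis
      unfolding h_def using rep rc_iff[of u "rep (?\<delta> u)"] that by (intro rc_class_eqI) auto
  qed
  have inj: "inj_on h (states A)"
    by (rule inj_onI) (metis mem_h rep)
  have img: "h ` states A = rc_classes \<Sigma> ?L"
  proof
    show "h ` states A \<subseteq> rc_classes \<Sigma> ?L"
      using rep unfolding h_def rc_classes_def by auto
    show "rc_classes \<Sigma> ?L \<subseteq> h ` states A"
      unfolding rc_classes_def
      using wf class_eq by (auto intro!: delta_star_in_states simp: wf_dba_def)
  qed
  have init: "h (init A) = rc_class \<Sigma> ?L []"
    using class_eq[of "[]"] by simp
  have step: "h (trans A q a) = rc_step \<Sigma> ?L (h q) a" if "q \<in> states A" "a \<in> \<Sigma>" for q a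
  proof -
    define w where "w = (SOME u. u \<in> h q)"
    have "w \<in> h q" unfolding w_def using mem_h rep that(1) by (intro someI) blast
    then have w: "w \<in> lists \<Sigma>" "?\<delta> w = q" using mem_h that(1) by auto
    have "rc_step \<Sigma> ?L (h q) a = rc_class \<Sigma> ?L (w @ [a])"
      unfolding rc_step_def w_def ..
    also have "\<dots> = h (trans A q a)"
      using w that(2) class_eq[of "w @ [a]"] by (simp add: delta_star_snoc)
    finally show ?thesis by simp
  qed
  show ?thesis
    unfolding informative_rc_def bij_betw_def
    by (intro exI[of _ h] conjI ballI inj img init step)
qed

lemma not_informative_rc_if_trivial_right_cong:
  assumes "trivial_right_cong \<Sigma> (lang \<Sigma> A)" "card (states A) \<noteq> 1"
  shows "\<not> informative_rc \<Sigma> A"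
proof
  assume "informative_rc \<Sigma> A"
  then have "card (states A) = card (rc_classes \<Sigma> (lang \<Sigma> A))"
    unfolding informative_rc_def by (blast intro: bij_betw_same_card)
  also have "rc_classes \<Sigma> (lang \<Sigma> A) = {rc_class \<Sigma> (lang \<Sigma> A) []}"
    using assms(1) rc_class_eqI
    unfolding rc_classes_def trivial_right_cong_def by fastforce
  finally show False using assms(2) by simp
qed

lemma lang_if_card_states_eq_1:
  assumes "wf_dba \<Sigma> A" "card (states A) = 1"
  shows "lang \<Sigma> A = omega_words \<Sigma> \<or> lang \<Sigma> A = {}"
proof -
  obtain q where q: "states A = {q}" using assms(2) by (rule card_1_singletonE)
  have "run A \<alpha> i = q" if "\<alpha> \<in> omega_words \<Sigma>" for \<alpha> i
  proof (induction i)
    case 0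
    show ?case using assms(1) q by (simp add: wf_dba_def)
  next
    case (Suc i)
    have "\<alpha> i \<in> \<Sigma>" using that by (simp add: omega_words_def)
    then show ?case using Suc assms(1) q by (simp add: wf_dba_def)
  qed
  then show ?thesis by (cases "q \<in> final A") (auto simp: lang_def)
qed

lemma D_minimal_if_card_states_le_2:
  assumes "wf_dba \<Sigma> B" "card (states B) \<le> 2"
    and "\<not> equiv_D D (lang \<Sigma> B) {}" "\<not> equiv_D D (lang \<Sigma> B) (omega_words \<Sigma>)"
  shows "D_minimal \<Sigma> D B"
  unfolding D_minimal_def
proof (intro conjI allI impI)
  fix B' assume B': "wf_dba \<Sigma> B' \<and> card (states B') < card (states B)"
  then have "card (states B') \<noteq> 0" by (auto simp: wf_dba_def)
  with B' assms(2) have "card (states B') = 1" by linarith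
  with B' have "lang \<Sigma> B' = omega_words \<Sigma> \<or> lang \<Sigma> B' = {}"
    using lang_if_card_states_eq_1 by blast
  then show "\<not> equiv_D D (lang \<Sigma> B') (lang \<Sigma> B)"
    using assms(3,4) by (auto simp: equiv_D_def)
qed (rule assms(1))

lemma dba_iso_init_final:
  assumes "dba_iso A B \<Sigma>" "wf_dba \<Sigma> A"
  shows "init A \<in> final A \<longleftrightarrow> init B \<in> final B"
  using assms unfolding dba_iso_def wf_dba_def by metis

definition Sigma012 :: "letter set" where
  "Sigma012 = {0, 1, 2}"

definition infinitely_many_twos :: "(nat \<Rightarrow> letter) set" where
  "infinitely_many_twos = {\<alpha> \<in> omega_words Sigma012. INFM i. \<alpha> i = 2}"

definition last_nontwo_zero_dba :: dba where
  "last_nontwo_zero_dba = \<lparr>states = {0, 1},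
     trans = \<lambda>q a. if a = 0 then 1 else if a = 1 then 0 else q, init = 0, final = {1}\<rparr>"

definition last_zero_dba :: "nat \<Rightarrow> dba" where
  "last_zero_dba q\<^sub>0 = \<lparr>states = {0, 1}, trans = \<lambda>q a. if a = 0 then 1 else 0,
     init = q\<^sub>0, final = {1}\<rparr>"

lemma wf_last_zero_dba:
  assumes "q\<^sub>0 \<in> {0, 1}"
  shows "wf_dba Sigma012 (last_zero_dba q\<^sub>0)"
  unfolding wf_dba_def
proof (intro conjI ballI)
  fix q assume "q \<in> states (last_zero_dba q\<^sub>0)"
  then show "\<exists>u\<in>lists Sigma012. delta_star (last_zero_dba q\<^sub>0) (init (last_zero_dba q\<^sub>0)) u = q"
    unfolding Sigma012_def
    by (auto simp: last_zero_dba_def intro!: bexI[of _ "[if q = 1 then 0 else 1]"])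
qed (use assms in \<open>auto simp: last_zero_dba_def\<close>)

lemma wf_last_nontwo_zero_dba: "wf_dba Sigma012 last_nontwo_zero_dba"
  unfolding wf_dba_def
proof (intro conjI ballI)
  fix q assume "q \<in> states last_nontwo_zero_dba"
  then show "\<exists>u\<in>lists Sigma012. delta_star last_nontwo_zero_dba (init last_nontwo_zero_dba) u = q"
    unfolding Sigma012_def
    by (auto simp: last_nontwo_zero_dba_def intro!: bexI[of _ "if q = 1 then [0] else []"])
qed (auto simp: last_nontwo_zero_dba_def)

lemma lang_last_zero_dba:
  "lang Sigma012 (last_zero_dba q\<^sub>0) = {\<alpha> \<in> omega_words Sigma012. INFM i. \<alpha> i = 0}"
proof -
  have "(INFM i. run (last_zero_dba q\<^sub>0) \<alpha> i \<in> {1}) \<longleftrightarrow> (INFM i. \<alpha> i = 0)" for \<alpha>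
  proof -
    have "run (last_zero_dba q\<^sub>0) \<alpha> (Suc i) \<in> {1} \<longleftrightarrow> \<alpha> i = 0" for i
      by (simp add: last_zero_dba_def)
    then show ?thesis
      using INFM_Suc_iff[of "\<lambda>i. run (last_zero_dba q\<^sub>0) \<alpha> i \<in> {1}"] by simp
  qed
  moreover have "final (last_zero_dba q\<^sub>0) = {1}" by (simp add: last_zero_dba_def)
  ultimately show ?thesis by (simp add: lang_def)
qed

lemma lang_last_nontwo_zero_dba_outside_infinitely_many_twos:
  assumes "\<alpha> \<in> omega_words Sigma012" "\<alpha> \<notin> infinitely_many_twos"
  shows "\<alpha> \<in> lang Sigma012 last_nontwo_zero_dba \<longleftrightarrow> (INFM i. \<alpha> i = 0)"
proof -
  let ?r = "run last_nontwo_zero_dba \<alpha>"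
  have "MOST i. \<alpha> i \<noteq> 2" using assms by (simp add: infinitely_many_twos_def)
  then have "MOST i. \<alpha> i = 0 \<or> \<alpha> i = 1"
    by (rule MOST_mono) (use assms(1) in \<open>auto simp: omega_words_def Sigma012_def\<close>)
  then have "(INFM i. ?r (Suc i) = 1) \<longleftrightarrow> (INFM i. \<alpha> i = 0)"
    by (auto simp: last_nontwo_zero_dba_def elim: INFM_mono dest: INFM_conjI)
  with INFM_Suc_iff[of "\<lambda>i. ?r i = 1"] show ?thesis
    using assms(1) by (simp add: lang_def last_nontwo_zero_dba_def)
qed

lemma equiv_D_last_zero_dba:
  "equiv_D infinitely_many_twos
    (lang Sigma012 (last_zero_dba q\<^sub>0)) (lang Sigma012 last_nontwo_zero_dba)"
  unfolding equiv_D_def lang_last_zero_dba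
  using lang_last_nontwo_zero_dba_outside_infinitely_many_twos by (auto simp: lang_def)

lemma D_minimal_last_zero_dba:
  assumes "q\<^sub>0 \<in> {0, 1}"
  shows "D_minimal Sigma012 infinitely_many_twos (last_zero_dba q\<^sub>0)"
proof (rule D_minimal_if_card_states_le_2)
  show "wf_dba Sigma012 (last_zero_dba q\<^sub>0)"
    using assms by (rule wf_last_zero_dba)
  show "card (states (last_zero_dba q\<^sub>0)) \<le> 2"
    by (simp add: last_zero_dba_def)
  have "(\<lambda>_. a) \<in> omega_words Sigma012" if "a \<in> {0, 1}" for a
    using that by (auto simp: omega_words_def Sigma012_def)
  then have "(\<lambda>_. 0) \<in> lang Sigma012 (last_zero_dba q\<^sub>0) - infinitely_many_twos"
    and "(\<lambda>_. 1) \<in> omega_words Sigma012 - infinitely_many_twos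
      - lang Sigma012 (last_zero_dba q\<^sub>0)"
    by (simp_all add: lang_last_zero_dba infinitely_many_twos_def)
  then show "\<not> equiv_D infinitely_many_twos (lang Sigma012 (last_zero_dba q\<^sub>0)) {}"
    and "\<not> equiv_D infinitely_many_twos (lang Sigma012 (last_zero_dba q\<^sub>0))
      (omega_words Sigma012)"
    unfolding equiv_D_def by blast+
qed

lemma informative_rc_last_nontwo_zero_dba: "informative_rc Sigma012 last_nontwo_zero_dba"
proof (rule informative_rcI[OF wf_last_nontwo_zero_dba])
  let ?A = last_nontwo_zero_dba
  let ?\<delta> = "delta_star ?A (init ?A)"
  have A: "states ?A = {0, 1}" "final ?A = {1}"
    by (simp_all add: last_nontwo_zero_dba_def)
  have twos: "(\<lambda>_. 2) \<in> omega_words Sigma012"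
    by (simp add: omega_words_def Sigma012_def)
  have stay: "run (?A\<lparr>init := q\<rparr>) (\<lambda>_. 2) i = q" for q i
    by (induction i) (simp_all add: last_nontwo_zero_dba_def)
  have accept_iff: "prepend w (\<lambda>_. 2) \<in> lang Sigma012 ?A \<longleftrightarrow> ?\<delta> w = 1"
    if "w \<in> lists Sigma012" for w
    using prepend_in_lang_iff[OF that twos, of ?A] by (simp add: stay A)
  fix u v assume u: "u \<in> lists Sigma012" and v: "v \<in> lists Sigma012"
    and "right_cong Sigma012 (lang Sigma012 ?A) u v"
  then have "?\<delta> u = 1 \<longleftrightarrow> ?\<delta> v = 1"
    using twos accept_iff[OF u] accept_iff[OF v] unfolding right_cong_def by blast
  moreover have "?\<delta> u \<in> {0, 1}" "?\<delta> v \<in> {0, 1}"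
    using delta_star_in_states[OF wf_last_nontwo_zero_dba] wf_last_nontwo_zero_dba u v A
    by (auto simp: wf_dba_def)
  ultimately show "?\<delta> u = ?\<delta> v" by auto
qed

lemma not_informative_rc_last_zero_dba: "\<not> informative_rc Sigma012 (last_zero_dba q\<^sub>0)"
proof (rule not_informative_rc_if_trivial_right_cong)
  show "trivial_right_cong Sigma012 (lang Sigma012 (last_zero_dba q\<^sub>0))"
    unfolding lang_last_zero_dba by (rule trivial_right_cong_INFM_letter)
qed (simp add: last_zero_dba_def)

lemma not_dba_iso_last_zero_dba: "\<not> dba_iso (last_zero_dba 0) (last_zero_dba 1) Sigma012"
proof
  assume "dba_iso (last_zero_dba 0) (last_zero_dba 1) Sigma012"
  then have "init (last_zero_dba 0) \<in> final (last_zero_dba 0) \<longleftrightarrow>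
      init (last_zero_dba 1) \<in> final (last_zero_dba 1)"
    by (rule dba_iso_init_final) (simp add: wf_last_zero_dba)
  then show False by (simp add: last_zero_dba_def)
qed

theorem proposition2:
  shows "\<exists>(\<Sigma>::letter set) D A. finite \<Sigma> \<and> \<Sigma> \<noteq> {} \<and> D \<subseteq> omega_words \<Sigma>
     \<and> trivial_right_cong \<Sigma> D \<and> wf_dba \<Sigma> A \<and> informative_rc \<Sigma> A
     \<and> (\<exists>B1 B2. D_minimal \<Sigma> D B1 \<and> equiv_D D (lang \<Sigma> B1) (lang \<Sigma> A)
              \<and> D_minimal \<Sigma> D B2 \<and> equiv_D D (lang \<Sigma> B2) (lang \<Sigma> A)
              \<and> \<not> dba_iso B1 B2 \<Sigma>)
     \<and> (\<exists>B. D_minimal \<Sigma> D B \<and> equiv_D D (lang \<Sigma> B) (lang \<Sigma> A) \<and> \<not> informative_rc \<Sigma> B)"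
proof (intro exI conjI)
  show "finite Sigma012" "Sigma012 \<noteq> {}" by (simp_all add: Sigma012_def)
  show "infinitely_many_twos \<subseteq> omega_words Sigma012"
    by (auto simp: infinitely_many_twos_def)
  show "trivial_right_cong Sigma012 infinitely_many_twos"
    unfolding infinitely_many_twos_def by (rule trivial_right_cong_INFM_letter)
  show "informative_rc Sigma012 last_nontwo_zero_dba"
    by (rule informative_rc_last_nontwo_zero_dba)
  show "\<not> dba_iso (last_zero_dba 0) (last_zero_dba 1) Sigma012"
    by (rule not_dba_iso_last_zero_dba)
  show "\<not> informative_rc Sigma012 (last_zero_dba 0)"
    by (rule not_informative_rc_last_zero_dba)
qed (simp_all add: wf_last_nontwo_zero_dba D_minimal_last_zero_dba equiv_D_last_zero_dba)

end
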